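(* Let $\alpha\in\mathbb{R}\setminus\{0\}$, let $\delta^{\star}(\alpha)=1/\alpha^2$ if $\alpha\le 2$ and $\delta^{\star}(\alpha)=\frac{1}{2\alpha}\exp\{1-\frac{\alpha}{2}\}$ if $\alpha>2$, let $|\delta|\le\delta^{\star}(\alpha)$, and let $C(u,v)=uv+\delta(1-e^{\alpha(u-u^2)})(1-e^{\alpha(v-v^2)})$ on $[0,1]^2$. Then $C$ has no tail dependence: $$\lambda_L=\lim_{u\to0^+}\frac{C(u,u)}{u}=0,\qquad \lambda_U=\lim_{u\to1^-}\frac{1-2u+C(u,u)}{1-u}=0.$$ *)

theory Defs
  imports Complex_Main
begin

definition delta_star :: "real \<Rightarrow> real" where
  "delta_star \<alpha> = (if \<alpha> \<le> 2 then 1 / \<alpha>^2 else (1 / (2 * \<alpha>)) * exp (1 - \<alpha> / 2))"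

definition copC :: "real \<Rightarrow> real \<Rightarrow> real \<Rightarrow> real \<Rightarrow> real" where
  "copC \<alpha> \<delta> u v = u * v + \<delta> * (1 - exp (\<alpha> * (u - u^2))) * (1 - exp (\<alpha> * (v - v^2)))"

end

theory Submission
  imports Defs
begin

text \<open>On the diagonal, \<open>C(u,u) = u\<^sup>2 + \<delta> h(u)\<^sup>2\<close> with \<open>h(u) = 1 - exp (\<alpha> (u - u\<^sup>2))\<close>,
  and \<open>1 - 2u + C(u,u) = (1 - u)\<^sup>2 + \<delta> h(u)\<^sup>2\<close>. Since \<open>h\<close> is differentiable and vanishes
  at \<open>0\<close> and \<open>1\<close>, each numerator is a combination of squares of differentiable functions
  vanishing at the endpoint, and such a square is \<open>o(u - a)\<close>.\<close>

lemma tendsto_square_div_at_root: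
  fixes f :: "real \<Rightarrow> real"
  assumes "(f has_real_derivative D) (at a)" and "f a = 0"
  shows "((\<lambda>x. (f x)\<^sup>2 / (x - a)) \<longlongrightarrow> 0) (at a)"
proof -
  have "((\<lambda>x. (f x - f a) / (x - a)) \<longlongrightarrow> D) (at a)"
    using assms(1) by (simp add: has_field_derivative_iff)
  moreover have "(f \<longlongrightarrow> 0) (at a)"
    using DERIV_isCont[OF assms(1)] assms(2) by (simp add: isCont_def)
  ultimately have "((\<lambda>x. (f x - f a) / (x - a) * f x) \<longlongrightarrow> D * 0) (at a)"
    by (rule tendsto_mult)
  then show ?thesis
    using assms(2) by (simp add: power2_eq_square)
qed

lemma copC_diagonal: "copC \<alpha> \<delta> u u = u\<^sup>2 + \<delta> * (1 - exp (\<alpha> * (u - u\<^sup>2)))\<^sup>2"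
  by (simp add: copC_def power2_eq_square)

lemma has_real_derivative_one_minus_exp_quadratic:
  "((\<lambda>u. 1 - exp (\<alpha> * (u - u\<^sup>2))) has_real_derivative
     - exp (\<alpha> * (x - x\<^sup>2)) * (\<alpha> * (1 - 2 * x))) (at x)"
  by (auto intro!: derivative_eq_intros simp: algebra_simps)

lemma copC_diagonal_div_tendsto_at_0:
  "((\<lambda>u. copC \<alpha> \<delta> u u / u) \<longlongrightarrow> 0) (at 0)"
proof -
  have "((\<lambda>u. (1 - exp (\<alpha> * (u - u\<^sup>2)))\<^sup>2 / (u - 0)) \<longlongrightarrow> 0) (at 0)"
    by (rule tendsto_square_div_at_root[OF has_real_derivative_one_minus_exp_quadratic]) simp
  then have "((\<lambda>u. u + \<delta> * ((1 - exp (\<alpha> * (u - u\<^sup>2)))\<^sup>2 / u)) \<longlongrightarrow> 0 + \<delta> * 0) (at 0)"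
    by (intro tendsto_intros) simp
  moreover have "\<forall>\<^sub>F u in at 0. u + \<delta> * ((1 - exp (\<alpha> * (u - u\<^sup>2)))\<^sup>2 / u) = copC \<alpha> \<delta> u u / u"
    by (rule eventually_mono[OF eventually_neq_at_within[of 0]])
      (simp add: copC_diagonal field_simps power2_eq_square)
  ultimately show ?thesis
    using tendsto_cong by force
qed

lemma copC_upper_tail_quotient_tendsto_at_1:
  "((\<lambda>u. (1 - 2 * u + copC \<alpha> \<delta> u u) / (1 - u)) \<longlongrightarrow> 0) (at 1)"
proof -
  have "((\<lambda>u. (1 - exp (\<alpha> * (u - u\<^sup>2)))\<^sup>2 / (u - 1)) \<longlongrightarrow> 0) (at 1)"
    by (rule tendsto_square_div_at_root[OF has_real_derivative_one_minus_exp_quadratic]) simp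
  then have "((\<lambda>u. (1 - u) - \<delta> * ((1 - exp (\<alpha> * (u - u\<^sup>2)))\<^sup>2 / (u - 1)))
      \<longlongrightarrow> (1 - 1) - \<delta> * 0) (at 1)"
    by (intro tendsto_intros)
  moreover have "\<forall>\<^sub>F u in at 1. (1 - u) - \<delta> * ((1 - exp (\<alpha> * (u - u\<^sup>2)))\<^sup>2 / (u - 1))
      = (1 - 2 * u + copC \<alpha> \<delta> u u) / (1 - u)"
    by (rule eventually_mono[OF eventually_neq_at_within[of 1]])
      (simp add: copC_diagonal field_simps power2_eq_square)
  ultimately show ?thesis
    using tendsto_cong by force
qed

theorem proposition4:
  fixes \<alpha> \<delta> :: real
  assumes "\<alpha> \<noteq> 0"
    and "\<bar>\<delta>\<bar> \<le> delta_star \<alpha>"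
  shows "((\<lambda>u. copC \<alpha> \<delta> u u / u) \<longlongrightarrow> 0) (at_right 0) \<and>
         ((\<lambda>u. (1 - 2 * u + copC \<alpha> \<delta> u u) / (1 - u)) \<longlongrightarrow> 0) (at_left 1)"
  using copC_diagonal_div_tendsto_at_0 copC_upper_tail_quotient_tendsto_at_1
  by (simp add: filterlim_at_split)

end
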